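(* Let $G$ be a query graph and let $R,S\in E^i$ be coupled edges with $S\not\lesssim R$ (i.e. $u_R\notin u_S^+$). Then $G$ admits an $(R,S)$-valid labeling.
   Context: $G=G[Q]$ is the query graph of a Boolean CQ without self-joins with atoms $R(u,v)$, $u\ne v$, first attribute the key: vertices are variables, each atom gives an edge $e_R=(u_R,v_R)$, consistent/inconsistent according to the type of $R$; $E^i$ = inconsistent edges. Paths may have zero edges; $x\leadsto y$ is a directed path; undirected paths ignore directions; for a path $P$ and vertex set $N$, $P\cap N$ is the set of vertices of $P$ in $N$. $u^+=\{v:u\leadsto v\}$, $u^{+,R}=\{v:u\leadsto v$ in $G-\{e_R\}\}$. For $R,S\in E^i$: $R\lesssim S$ iff $u_S\in u_R^+$; $R\sim S$ iff $R\lesssim S$ and $S\lesssim R$; $[R]$ is the class of $R$; $coupled^+(R)=[R]\cup\{S\in E^i:\exists$ undirected path $P$ from $v_R$ to $u_S$ with $P\cap u_R^{+,R}=\emptyset\}$; $R,S$ are coupled if $R\in coupled^+(S)$ and $S\in coupled^+(R)$. Label lattice: $\mathcal L=\{\bot,\mathbb B,X,\Phi,X^*,\top\}$ ordered as the lattice generated by $\bot<\mathbb B<\Phi<\top$, $\mathbb B<X^*<\top$, $\bot<X<X^*$ (so $\bot$ is least, $\top$ greatest, $\Phi$ and $X$ incomparable, $\Phi$ and $X^*$ incomparable, $X$ and $\mathbb B$ incomparable; e.g. $\Phi\wedge X^*=\mathbb B$, $\Phi\wedge X=\bot$, $\mathbb B\vee X=X^*$). For $R,S\in E^i$, a labeling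 $L:V(G)\to\mathcal L$ is $(R,S)$-valid if: (1) $L(u_R)=\Phi$ and $L(v_R)\in\{\top,X,X^*\}$; (2) $L(u_S)=X$ and $L(v_S)\in\{\mathbb B,X^*\}$; (3) for every edge $T\in E^i\setminus\{R,S\}$, $L(u_T)\ge L(v_T)$; (4) there is an undirected path $P_R$ from $v_R$ to $u_S$ with $L(w)\ge X$ for every vertex $w$ of $P_R$; (5) there is an undirected path $P_S$ from $v_S$ to $u_R$ with $L(w)\ge\mathbb B$ for every vertex $w$ of $P_S$. *)

theory Defs
  imports Main
begin

(* Query graph: edge (atom) names 'e, variables 'v; edge e goes from ue e (key) to ve e.
   E = all atoms, Ei = inconsistent atoms. Vertices = variables occurring in atoms. *)
definition query_graph :: "'e set \<Rightarrow> 'e set \<Rightarrow> ('e \<Rightarrow> 'v) \<Rightarrow> ('e \<Rightarrow> 'v) \<Rightarrow> bool" where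
  "query_graph E Ei ue ve \<longleftrightarrow> finite E \<and> Ei \<subseteq> E \<and> (\<forall>e\<in>E. ue e \<noteq> ve e)"

definition vertices :: "'e set \<Rightarrow> ('e \<Rightarrow> 'v) \<Rightarrow> ('e \<Rightarrow> 'v) \<Rightarrow> 'v set" where
  "vertices E ue ve = ue ` E \<union> ve ` E"

definition reach :: "'e set \<Rightarrow> ('e \<Rightarrow> 'v) \<Rightarrow> ('e \<Rightarrow> 'v) \<Rightarrow> 'v \<Rightarrow> 'v \<Rightarrow> bool" where
  "reach F ue ve x y \<longleftrightarrow> (x, y) \<in> {(ue e, ve e) | e. e \<in> F}\<^sup>*"

definition plus :: "'e set \<Rightarrow> ('e \<Rightarrow> 'v) \<Rightarrow> ('e \<Rightarrow> 'v) \<Rightarrow> 'v \<Rightarrow> 'v set" where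
  "plus E ue ve x = {y. reach E ue ve x y}"

definition plus_without :: "'e set \<Rightarrow> ('e \<Rightarrow> 'v) \<Rightarrow> ('e \<Rightarrow> 'v) \<Rightarrow> 'e \<Rightarrow> 'v \<Rightarrow> 'v set" where
  "plus_without E ue ve R x = {y. reach (E - {R}) ue ve x y}"

definition upath :: "'e set \<Rightarrow> ('e \<Rightarrow> 'v) \<Rightarrow> ('e \<Rightarrow> 'v) \<Rightarrow> 'v list \<Rightarrow> 'v \<Rightarrow> 'v \<Rightarrow> bool" where
  "upath E ue ve P x y \<longleftrightarrow> P \<noteq> [] \<and> hd P = x \<and> last P = y \<and>
     (\<forall>i. Suc i < length P \<longrightarrow>
        (\<exists>e\<in>E. (ue e = P ! i \<and> ve e = P ! Suc i) \<or> (ve e = P ! i \<and> ue e = P ! Suc i)))"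

definition lesssim :: "'e set \<Rightarrow> ('e \<Rightarrow> 'v) \<Rightarrow> ('e \<Rightarrow> 'v) \<Rightarrow> 'e \<Rightarrow> 'e \<Rightarrow> bool" where
  "lesssim E ue ve R S \<longleftrightarrow> ue S \<in> plus E ue ve (ue R)"

definition equiv_class :: "'e set \<Rightarrow> 'e set \<Rightarrow> ('e \<Rightarrow> 'v) \<Rightarrow> ('e \<Rightarrow> 'v) \<Rightarrow> 'e \<Rightarrow> 'e set" where
  "equiv_class E Ei ue ve R = {S \<in> Ei. lesssim E ue ve R S \<and> lesssim E ue ve S R}"

definition coupled_plus :: "'e set \<Rightarrow> 'e set \<Rightarrow> ('e \<Rightarrow> 'v) \<Rightarrow> ('e \<Rightarrow> 'v) \<Rightarrow> 'e \<Rightarrow> 'e set" where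
  "coupled_plus E Ei ue ve R = equiv_class E Ei ue ve R \<union>
     {S \<in> Ei. \<exists>P. upath E ue ve P (ve R) (ue S) \<and> set P \<inter> plus_without E ue ve R (ue R) = {}}"

definition coupled :: "'e set \<Rightarrow> 'e set \<Rightarrow> ('e \<Rightarrow> 'v) \<Rightarrow> ('e \<Rightarrow> 'v) \<Rightarrow> 'e \<Rightarrow> 'e \<Rightarrow> bool" where
  "coupled E Ei ue ve R S \<longleftrightarrow> R \<in> coupled_plus E Ei ue ve S \<and> S \<in> coupled_plus E Ei ue ve R"

datatype lab = LBot | LB | LX | LPhi | LXs | LTop

(* order generated by Bot<B<Phi<Top, B<Xs<Top, Bot<X<Xs (written out) *)
fun lab_le :: "lab \<Rightarrow> lab \<Rightarrow> bool" where
  "lab_le LBot _ = True"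
| "lab_le LB y = (y \<in> {LB, LPhi, LXs, LTop})"
| "lab_le LX y = (y \<in> {LX, LXs, LTop})"
| "lab_le LPhi y = (y \<in> {LPhi, LTop})"
| "lab_le LXs y = (y \<in> {LXs, LTop})"
| "lab_le LTop y = (y = LTop)"

instantiation lab :: order
begin
definition less_eq_lab :: "lab \<Rightarrow> lab \<Rightarrow> bool" where "less_eq_lab = lab_le"
definition less_lab :: "lab \<Rightarrow> lab \<Rightarrow> bool" where "less_lab x y = (lab_le x y \<and> x \<noteq> y)"
instance
proof
  fix x y z :: lab
  show "(x < y) = (x \<le> y \<and> \<not> y \<le> x)"
    by (cases x; cases y; simp add: less_eq_lab_def less_lab_def)
  show "x \<le> x" by (cases x; simp add: less_eq_lab_def)
  show "x \<le> y \<Longrightarrow> y \<le> z \<Longrightarrow> x \<le> z"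
    by (cases x; cases y; cases z; simp add: less_eq_lab_def)
  show "x \<le> y \<Longrightarrow> y \<le> x \<Longrightarrow> x = y"
    by (cases x; cases y; simp add: less_eq_lab_def)
qed
end

definition valid_labeling ::
  "'e set \<Rightarrow> 'e set \<Rightarrow> ('e \<Rightarrow> 'v) \<Rightarrow> ('e \<Rightarrow> 'v) \<Rightarrow> 'e \<Rightarrow> 'e \<Rightarrow> ('v \<Rightarrow> lab) \<Rightarrow> bool" where
  "valid_labeling E Ei ue ve R S L \<longleftrightarrow>
     L (ue R) = LPhi \<and> L (ve R) \<in> {LTop, LX, LXs} \<and>
     L (ue S) = LX \<and> L (ve S) \<in> {LB, LXs} \<and>
     (\<forall>T \<in> Ei - {R, S}. L (ue T) \<ge> L (ve T)) \<and>
     (\<exists>P. upath E ue ve P (ve R) (ue S) \<and> (\<forall>w\<in>set P. L w \<ge> LX)) \<and>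
     (\<exists>P. upath E ue ve P (ve S) (ue R) \<and> (\<forall>w\<in>set P. L w \<ge> LB))"

end

theory Submission
  imports Defs
begin

text \<open>Let \<open>A = u\<^sub>R\<^sup>+\<^sup>,\<^sup>R\<close>, \<open>B = u\<^sub>S\<^sup>+\<^sup>,\<^sup>S\<close> and \<open>N = u\<^sub>S\<^sup>+\<close>, so \<open>B \<subseteq> N\<close>.
  Label a vertex by which of the three sets contain it, with membership in a set lowering the
  label. Each set is closed under the edges relevant to condition (3), so labels never increase
  along such edges. Since \<open>S \<not>\<lesssim> R\<close>, neither edge lies in the class of the other, so
  coupling yields an undirected path from \<open>v\<^sub>R\<close> to \<open>u\<^sub>S\<close> avoiding \<open>A\<close> (labels \<open>\<ge> X\<close>) and one
  from \<open>v\<^sub>S\<close> to \<open>u\<^sub>R\<close> avoiding \<open>B\<close> (labels \<open>\<ge> \<bbbB>\<close>); finally \<open>u\<^sub>R \<notin> N\<close> gives \<open>L(u\<^sub>R) = \<Phi>\<close>.\<close>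

lemma reach_refl: "reach F ue ve x x"
  by (simp add: reach_def)

lemma reach_step: "reach F ue ve x (ue e) \<Longrightarrow> e \<in> F \<Longrightarrow> reach F ue ve x (ve e)"
  unfolding reach_def by (erule rtrancl_into_rtrancl) auto

lemma reach_mono: "reach F ue ve x y \<Longrightarrow> F \<subseteq> G \<Longrightarrow> reach G ue ve x y"
  unfolding reach_def by (erule rtrancl_mono[THEN subsetD, rotated]) auto

lemma plus_refl: "x \<in> plus E ue ve x"
  by (simp add: plus_def reach_refl)

lemma plus_without_refl: "x \<in> plus_without E ue ve R x"
  by (simp add: plus_without_def reach_refl)

lemma plus_closed: "T \<in> E \<Longrightarrow> ue T \<in> plus E ue ve x \<Longrightarrow> ve T \<in> plus E ue ve x"
  unfolding plus_def by (auto intro: reach_step)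

lemma plus_without_closed:
  "T \<in> E \<Longrightarrow> T \<noteq> R \<Longrightarrow> ue T \<in> plus_without E ue ve R x \<Longrightarrow> ve T \<in> plus_without E ue ve R x"
  unfolding plus_without_def by (auto intro: reach_step)

lemma plus_without_subset_plus: "plus_without E ue ve R x \<subseteq> plus E ue ve x"
  unfolding plus_def plus_without_def by (auto intro: reach_mono)

lemma upath_ends_in_set: "upath E ue ve P x y \<Longrightarrow> x \<in> set P \<and> y \<in> set P"
  unfolding upath_def by auto

lemma not_lesssim_not_in_equiv_class:
  "\<not> lesssim E ue ve S R \<Longrightarrow> S \<notin> equiv_class E Ei ue ve R \<and> R \<notin> equiv_class E Ei ue ve S"
  by (simp add: equiv_class_def)

lemma coupled_plus_avoiding_upath:
  assumes "S \<in> coupled_plus E Ei ue ve R" and "S \<notin> equiv_class E Ei ue ve R"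
  obtains P where "upath E ue ve P (ve R) (ue S)"
    and "set P \<inter> plus_without E ue ve R (ue R) = {}"
  using assms unfolding coupled_plus_def by blast

definition region_label :: "bool \<Rightarrow> bool \<Rightarrow> bool \<Rightarrow> lab" where
  "region_label a b n =
     (if a then (if b then LBot else if n then LB else LPhi)
      else (if b then LX else if n then LXs else LTop))"

lemma region_label_antimono:
  assumes "b' \<longrightarrow> n'" "a \<longrightarrow> a'" "b \<longrightarrow> b'" "n \<longrightarrow> n'"
  shows "region_label a' b' n' \<le> region_label a b n"
  using assms
  by (cases a; cases b; cases n; cases a'; cases b'; cases n')
     (simp_all add: region_label_def less_eq_lab_def)

lemma valid_labeling_from_regions:
  assumes Ei: "Ei \<subseteq> E" and BN: "B \<subseteq> N"
    and A_closed: "\<And>T. T \<in> E \<Longrightarrow> T \<noteq> R \<Longrightarrow> ue T \<in> A \<Longrightarrow> ve T \<in> A"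
    and B_closed: "\<And>T. T \<in> E \<Longrightarrow> T \<noteq> S \<Longrightarrow> ue T \<in> B \<Longrightarrow> ve T \<in> B"
    and N_closed: "\<And>T. T \<in> E \<Longrightarrow> ue T \<in> N \<Longrightarrow> ve T \<in> N"
    and uR: "ue R \<in> A" "ue R \<notin> N" and uS: "ue S \<in> B" and vS: "ve S \<in> N"
    and P1: "upath E ue ve P1 (ve R) (ue S)" "set P1 \<inter> A = {}"
    and P2: "upath E ue ve P2 (ve S) (ue R)" "set P2 \<inter> B = {}"
  shows "valid_labeling E Ei ue ve R S (\<lambda>w. region_label (w \<in> A) (w \<in> B) (w \<in> N))"
    (is "valid_labeling _ _ _ _ _ _ ?L")
proof -
  have "ve R \<notin> A" "ue S \<notin> A" using upath_ends_in_set[OF P1(1)] P1(2) by auto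
  moreover have "ve S \<notin> B" using upath_ends_in_set[OF P2(1)] P2(2) by auto
  moreover have "ue R \<notin> B" using uR BN by blast
  ultimately have ends: "?L (ue R) = LPhi" "?L (ve R) \<in> {LTop, LX, LXs}"
      "?L (ue S) = LX" "?L (ve S) \<in> {LB, LXs}"
    using uR uS vS by (auto simp: region_label_def)
  have "?L (ve T) \<le> ?L (ue T)" if "T \<in> Ei - {R, S}" for T
    using that Ei BN A_closed B_closed N_closed
    by (intro region_label_antimono) auto
  moreover have "\<forall>w\<in>set P1. ?L w \<ge> LX" "\<forall>w\<in>set P2. ?L w \<ge> LB"
    using P1(2) P2(2) BN by (auto simp: region_label_def less_eq_lab_def)
  ultimately show ?thesis
    unfolding valid_labeling_def using ends P1(1) P2(1) by blast
qed

theorem proposition6p2: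
  fixes E Ei :: "'e set" and ue ve :: "'e \<Rightarrow> 'v" and R S :: 'e
  assumes "query_graph E Ei ue ve"
    and "R \<in> Ei" and "S \<in> Ei"
    and "coupled E Ei ue ve R S"
    and "\<not> lesssim E ue ve S R"
  shows "\<exists>L :: 'v \<Rightarrow> lab. valid_labeling E Ei ue ve R S L"
proof -
  have Ei: "Ei \<subseteq> E" using assms(1) by (simp add: query_graph_def)
  have classes: "S \<notin> equiv_class E Ei ue ve R" "R \<notin> equiv_class E Ei ue ve S"
    using not_lesssim_not_in_equiv_class[OF assms(5)] by auto
  obtain P1 where P1: "upath E ue ve P1 (ve R) (ue S)"
      "set P1 \<inter> plus_without E ue ve R (ue R) = {}"
    using assms(4) classes(1) by (auto simp: coupled_def elim: coupled_plus_avoiding_upath)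
  obtain P2 where P2: "upath E ue ve P2 (ve S) (ue R)"
      "set P2 \<inter> plus_without E ue ve S (ue S) = {}"
    using assms(4) classes(2) by (auto simp: coupled_def elim: coupled_plus_avoiding_upath)
  have "ue R \<notin> plus E ue ve (ue S)" using assms(5) by (simp add: lesssim_def)
  moreover have "ve S \<in> plus E ue ve (ue S)"
    using assms(3) Ei by (auto intro: plus_closed plus_refl)
  ultimately show ?thesis
    using valid_labeling_from_regions[OF Ei plus_without_subset_plus _ _ _ _ _ _ _ P1 P2]
    by (blast intro: plus_closed plus_without_closed plus_without_refl)
qed

end
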